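(* For all $m,n\ge2$, $$\#\operatorname{vert}(\Box_m,\Diamond_n)\ge 2n+2mn(2n-1)+2mn(m-1)(n-1).$$
   Context: For convex polytopes $P,Q$, $\operatorname{Hom}(P,Q)$ is the set of maps $P\to Q$ that are restrictions of affine maps $\operatorname{Aff}(P)\to\operatorname{Aff}(Q)$; it is a convex polytope in the affine space of affine maps $\operatorname{Aff}(P)\to\operatorname{Aff}(Q)$, and $\operatorname{vert}(P,Q)$ denotes its set of vertices. $\Box_m=\operatorname{conv}\{(a_1,\ldots,a_m):a_i=\pm1\}\subset\mathbb{R}^m$, $\Diamond_n=\operatorname{conv}(\pm e_1,\ldots,\pm e_n)\subset\mathbb{R}^n$. *)

theory Defs
  imports "HOL-Analysis.Analysis"
begin

definition cube_poly :: "(real ^ 'm) set" where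
  "cube_poly = convex hull {x. \<forall>i. x $ i = 1 \<or> x $ i = -1}"

definition cross_poly :: "(real ^ 'n) set" where
  "cross_poly = convex hull ((\<lambda>i. axis i 1) ` UNIV \<union> (\<lambda>i. axis i (-1)) ` UNIV)"

definition Hom_poly :: "(real ^ 'm) set \<Rightarrow> (real ^ 'n) set \<Rightarrow> ((real ^ 'm ^ 'n) \<times> (real ^ 'n)) set" where
  "Hom_poly P Q = {(A, b). \<forall>x\<in>P. A *v x + b \<in> Q}"

definition vert_poly :: "(real ^ 'm) set \<Rightarrow> (real ^ 'n) set \<Rightarrow> ((real ^ 'm ^ 'n) \<times> (real ^ 'n)) set" where
  "vert_poly P Q = {f. f extreme_point_of Hom_poly P Q}"

end

theory Submission
  imports Defs
begin

(* An affine map sending every sign vector (vertex of the cube) to a vertex +-e_i of the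
  cross-polytope is a vertex of Hom(cube, cross): affine maps are determined by their values at
  the sign vectors, and each of these values is an extreme point of the cross-polytope, so the map
  is not an interior point of a segment in Hom(cube, cross) with distinct endpoints. Three
  families of such maps give the bound: the 2n constant maps; for each coordinate k and ordered
  pair p ~= q of vertices, the map x |-> (p or q, according to the sign of x_k); and for ordered
  pairs k ~= l, i ~= j and a sign s, the map sending (x_k, x_l) = (1,1), (1,-1), (-1,1), (-1,-1)
  to s e_i, e_j, -e_j, -s e_i. Their linear parts have 0, 1 and 2 nonzero columns respectively,
  and within each family the parameters can be read off the columns. *)

definition eval_at :: "real^'m \<Rightarrow> (real^'m^'n) \<times> (real^'n) \<Rightarrow> real^'n" where
  "eval_at x = (\<lambda>(A, b). A *v x + b)"

lemma eval_at_add: "eval_at x (f + g) = eval_at x f + eval_at x g"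
  by (cases f, cases g) (simp add: eval_at_def matrix_vector_mult_add_rdistrib)

lemma eval_at_scaleR: "eval_at x (c *\<^sub>R f) = c *\<^sub>R eval_at x f"
  by (cases f) (simp add: eval_at_def scaleR_matrix_vector_assoc scaleR_add_right)

lemma eval_at_diff: "eval_at x (f - g) = eval_at x f - eval_at x g"
  by (cases f, cases g) (simp add: eval_at_def matrix_vector_mult_diff_rdistrib)

lemma linear_eval_at: "linear (eval_at x)"
  by (intro linearI eval_at_add eval_at_scaleR)

lemma Hom_poly_eval_at: "Hom_poly P Q = {f. \<forall>x\<in>P. eval_at x f \<in> Q}"
  by (auto simp: Hom_poly_def eval_at_def)

lemma convex_affine_vimage:
  fixes A :: "real^'m^'n"
  assumes "convex Q"
  shows "convex {x. A *v x + b \<in> Q}"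
proof -
  have "{x. A *v x + b \<in> Q} = (*v) A -` ((\<lambda>y. y - b) ` Q)"
    by (auto simp: image_iff) (metis add_diff_cancel)
  then show ?thesis
    by (metis assms convex_linear_vimage convex_translation_subtract matrix_vector_mul_linear)
qed

lemma Hom_poly_convex_hull:
  assumes "convex Q"
  shows "Hom_poly (convex hull S) Q = (\<Inter>x\<in>S. eval_at x -` Q)"
proof -
  have "convex hull S \<subseteq> {x. A *v x + b \<in> Q}" if "\<forall>x\<in>S. A *v x + b \<in> Q" for A b
    using that by (intro hull_minimal convex_affine_vimage assms) auto
  then show ?thesis
    unfolding Hom_poly_def eval_at_def by (fastforce intro: hull_inc)
qed

lemma polyhedron_linear_vimage:
  fixes f :: "'a::euclidean_space \<Rightarrow> 'b::euclidean_space"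
  assumes "linear f" and "polyhedron Q"
  shows "polyhedron (f -` Q)"
proof -
  obtain F where F: "finite F" "Q = \<Inter>F"
    and halfspace: "\<forall>h\<in>F. \<exists>a b. a \<noteq> 0 \<and> h = {y. a \<bullet> y \<le> b}"
    using \<open>polyhedron Q\<close> unfolding polyhedron_def by blast
  have vimage_halfspace: "polyhedron (f -` h)" if h: "h \<in> F" for h
  proof -
    obtain a b where "h = {y. a \<bullet> y \<le> b}" using halfspace h by blast
    moreover have "a \<bullet> f x = adjoint f a \<bullet> x" for x
      using adjoint_works[OF \<open>linear f\<close>, of x a] by (simp add: inner_commute)
    ultimately have "f -` h = {x. adjoint f a \<bullet> x \<le> b}"
      by simp
    then show ?thesis by (simp add: polyhedron_halfspace_le)
  qed
  have "f -` Q = \<Inter>((-`) f ` F)"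
    using F(2) by auto
  then show ?thesis
    using F(1) vimage_halfspace by auto
qed

lemma polyhedron_Hom_poly_convex_hull:
  assumes "finite S" and "polyhedron Q"
  shows "polyhedron (Hom_poly (convex hull S) Q)"
  using assms
  by (auto simp: Hom_poly_convex_hull polyhedron_imp_convex
      intro!: polyhedron_linear_vimage linear_eval_at)

lemma extreme_point_of_Hom_poly:
  fixes f :: "(real^'m^'n) \<times> (real^'n)"
  assumes "S \<subseteq> P"
    and determined: "\<And>g h :: (real^'m^'n) \<times> (real^'n).
      (\<And>x. x \<in> S \<Longrightarrow> eval_at x g = eval_at x h) \<Longrightarrow> g = h"
    and "f \<in> Hom_poly P Q"
    and extreme: "\<And>x. x \<in> S \<Longrightarrow> eval_at x f extreme_point_of Q"
  shows "f extreme_point_of Hom_poly P Q"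
  unfolding extreme_point_of_def
proof (intro conjI ballI notI)
  show "f \<in> Hom_poly P Q" by fact
  fix g h assume g: "g \<in> Hom_poly P Q" and h: "h \<in> Hom_poly P Q" and "f \<in> open_segment g h"
  then obtain u where u: "0 < u" "u < 1" and "g \<noteq> h" and f: "f = (1 - u) *\<^sub>R g + u *\<^sub>R h"
    unfolding in_segment(2) by blast
  have agree: "eval_at x g = eval_at x h" if "x \<in> S" for x
  proof (rule ccontr)
    assume "eval_at x g \<noteq> eval_at x h"
    moreover have "eval_at x f = (1 - u) *\<^sub>R eval_at x g + u *\<^sub>R eval_at x h"
      by (simp add: f eval_at_add eval_at_scaleR)
    ultimately have "eval_at x f \<in> open_segment (eval_at x g) (eval_at x h)"
      using u unfolding in_segment(2) by blast
    moreover have "eval_at x g \<in> Q" "eval_at x h \<in> Q"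
      using g h \<open>x \<in> S\<close> \<open>S \<subseteq> P\<close> by (auto simp: Hom_poly_eval_at)
    ultimately show False
      using extreme[OF \<open>x \<in> S\<close>] unfolding extreme_point_of_def by blast
  qed
  then have "g = h" by (rule determined)
  with \<open>g \<noteq> h\<close> show False by contradiction
qed

definition sign_vectors :: "(real^'m) set" where
  "sign_vectors = {x. \<forall>i. x $ i = 1 \<or> x $ i = -1}"

lemma cube_poly_eq: "cube_poly = convex hull sign_vectors"
  by (simp add: cube_poly_def sign_vectors_def)

lemma finite_sign_vectors: "finite sign_vectors"
proof -
  have "vec_nth ` sign_vectors \<subseteq> UNIV \<rightarrow>\<^sub>E {1, -1 :: real}"
    by (auto simp: sign_vectors_def)
  then have "finite (vec_nth ` sign_vectors)"
    by (rule finite_subset) (simp add: finite_PiE)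
  then show ?thesis
    by (rule finite_imageD) (simp add: inj_on_def vec_nth_inject)
qed

lemma eq_if_eval_at_sign_vectors_eq:
  fixes f g :: "(real^'m^'n) \<times> (real^'n)"
  assumes agree: "\<And>x. x \<in> sign_vectors \<Longrightarrow> eval_at x f = eval_at x g"
  shows "f = g"
proof -
  obtain D e where De: "f - g = (D, e)" by fastforce
  have zero: "D *v x + e = 0" if "x \<in> sign_vectors" for x
    using agree[OF that] eval_at_diff[of x f g] by (simp add: De eval_at_def)
  define one :: "real^'m" where "one = (\<chi> i. 1)"
  have "one \<in> sign_vectors" "- one \<in> sign_vectors"
    by (auto simp: one_def sign_vectors_def)
  moreover have "D *v (- one) = - (D *v one)"
    using matrix_vector_mult_diff_distrib[of D 0 one] by simp
  ultimately have one: "D *v one + e = 0" and minus_one: "- (D *v one) + e = 0"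
    using zero by metis+
  have "2 *\<^sub>R e = (D *v one + e) + (- (D *v one) + e)"
    by (simp add: scaleR_2)
  then have e: "e = 0"
    using one minus_one by simp
  with one have "D *v one = 0" by simp
  have "column k D = 0" for k
  proof -
    have "one - 2 *\<^sub>R axis k 1 \<in> sign_vectors"
      by (auto simp: one_def sign_vectors_def axis_def)
    then have "D *v (one - 2 *\<^sub>R axis k 1) = 0"
      using zero e by fastforce
    with \<open>D *v one = 0\<close> show ?thesis
      by (simp add: matrix_vector_mult_diff_distrib matrix_vector_mult_scaleR
          matrix_vector_mult_basis)
  qed
  then have "D = 0"
    by (simp add: vec_eq_iff column_def)
  with e De show ?thesis by (simp flip: zero_prod_def)
qed

definition cross_vertices :: "(real^'n) set" where
  "cross_vertices = (\<lambda>(i, \<sigma>). axis i \<sigma>) ` (UNIV \<times> {1, -1})"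

lemma cross_poly_eq: "cross_poly = convex hull cross_vertices"
proof -
  have generators:
    "range (\<lambda>i. axis i 1) \<union> range (\<lambda>i. axis i (-1)) = (cross_vertices :: (real^'n) set)"
    by (auto simp: cross_vertices_def)
  show ?thesis
    unfolding cross_poly_def generators ..
qed

lemma finite_cross_vertices: "finite cross_vertices"
  by (simp add: cross_vertices_def)

lemma card_cross_vertices: "card (cross_vertices :: (real^'n) set) = 2 * CARD('n)"
proof -
  have "inj_on (\<lambda>(i :: 'n, \<sigma> :: real). axis i \<sigma>) (UNIV \<times> {1, -1})"
    by (auto simp: inj_on_def axis_eq_axis)
  then show ?thesis
    by (simp add: cross_vertices_def card_image card_cartesian_product)
qed

lemma uminus_cross_vertices: "w \<in> cross_vertices \<Longrightarrow> - w \<in> cross_vertices"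
  by (auto simp: cross_vertices_def image_iff vec_eq_iff axis_def)

lemma extreme_point_of_cross_poly: "w extreme_point_of cross_poly \<longleftrightarrow> w \<in> cross_vertices"
proof -
  have "w \<notin> convex hull (cross_vertices - {w})"
    if w_vertex: "w \<in> cross_vertices" for w :: "real^'n"
  proof
    obtain i \<sigma> where \<sigma>: "\<sigma> = 1 \<or> \<sigma> = -1" and w: "w = axis i \<sigma>"
      using w_vertex by (auto simp: cross_vertices_def)
    have "cross_vertices - {w} \<subseteq> {y. w \<bullet> y \<le> 0}"
      using \<sigma> by (auto simp: cross_vertices_def w inner_axis_axis axis_eq_axis)
    then have "convex hull (cross_vertices - {w}) \<subseteq> {y. w \<bullet> y \<le> 0}"
      by (rule hull_minimal) (rule convex_halfspace_le)
    moreover assume "w \<in> convex hull (cross_vertices - {w})"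
    ultimately show False
      using \<sigma> by (auto simp: w inner_axis_axis)
  qed
  then show ?thesis
    unfolding cross_poly_eq
    by (intro extreme_point_of_convex_hull_convex_independent finite_imp_compact
        finite_cross_vertices)
qed

lemma finite_vert_poly_cube_cross:
  "finite (vert_poly (cube_poly :: (real^'m) set) (cross_poly :: (real^'n) set))"
  unfolding vert_poly_def cube_poly_eq cross_poly_eq
  by (intro finite_polyhedron_extreme_points polyhedron_Hom_poly_convex_hull
      finite_sign_vectors polyhedron_convex_hull finite_cross_vertices)

lemma mem_vert_poly_cube_cross:
  fixes f :: "(real^'m^'n) \<times> (real^'n)"
  assumes "\<And>x. x \<in> sign_vectors \<Longrightarrow> eval_at x f \<in> cross_vertices"
  shows "f \<in> vert_poly cube_poly cross_poly"
  unfolding vert_poly_def mem_Collect_eq cube_poly_eq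
proof (rule extreme_point_of_Hom_poly[OF hull_subset])
  show "f \<in> Hom_poly (convex hull sign_vectors) cross_poly"
    using assms by (auto simp: Hom_poly_convex_hull cross_poly_eq intro: hull_inc)
  show "\<And>g h. (\<And>x. x \<in> sign_vectors \<Longrightarrow> eval_at x g = eval_at x h) \<Longrightarrow> g = h"
    by (rule eq_if_eval_at_sign_vectors_eq)
qed (use assms in \<open>simp add: extreme_point_of_cross_poly\<close>)

definition single_column :: "'m \<Rightarrow> real^'n \<Rightarrow> real^'m^'n" where
  "single_column k v = (\<chi> r c. if c = k then v $ r else 0)"

lemma single_column_mult: "single_column k v *v x = x $ k *\<^sub>R v"
proof -
  have "(\<Sum>c\<in>UNIV. (if c = k then v $ r else 0) * x $ c) =
      (\<Sum>c\<in>UNIV. if c = k then x $ k * v $ r else 0)" for r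
    by (rule sum.cong) auto
  then show ?thesis
    by (simp add: single_column_def matrix_vector_mult_def vec_eq_iff)
qed

lemma column_single_column: "column c (single_column k v) = (if c = k then v else 0)"
  by (simp add: column_def single_column_def vec_eq_iff)

lemma column_add: "column c (A + B) = column c A + column c B"
  by (simp add: column_def vec_eq_iff)

definition coordinate_map ::
  "'m \<Rightarrow> real^'n \<Rightarrow> real^'n \<Rightarrow> (real^'m^'n) \<times> (real^'n)" where
  "coordinate_map k p q = (single_column k ((1/2) *\<^sub>R (p - q)), (1/2) *\<^sub>R (p + q))"

definition two_coordinate_map ::
  "'m \<Rightarrow> 'm \<Rightarrow> real^'n \<Rightarrow> real^'n \<Rightarrow> (real^'m^'n) \<times> (real^'n)" where
  "two_coordinate_map k l u v =
    (single_column k ((1/2) *\<^sub>R (u + v)) + single_column l ((1/2) *\<^sub>R (u - v)), 0)"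

lemma eval_at_coordinate_map:
  assumes "x \<in> sign_vectors"
  shows "eval_at x (coordinate_map k p q) = (if x $ k = 1 then p else q)"
proof -
  have "x $ k = 1 \<or> x $ k = -1"
    using assms by (simp add: sign_vectors_def)
  then show ?thesis
    by (auto simp: coordinate_map_def eval_at_def single_column_mult vec_eq_iff field_simps)
qed

lemma eval_at_two_coordinate_map:
  assumes "x \<in> sign_vectors"
  shows "eval_at x (two_coordinate_map k l u v) =
    (if x $ k = 1 then if x $ l = 1 then u else v else if x $ l = 1 then - v else - u)"
proof -
  have "x $ k = 1 \<or> x $ k = -1" "x $ l = 1 \<or> x $ l = -1"
    using assms by (simp_all add: sign_vectors_def)
  then show ?thesis
    by (auto simp: two_coordinate_map_def eval_at_def single_column_mult
        matrix_vector_mult_add_rdistrib vec_eq_iff field_simps)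
qed

lemma two_coordinate_map_swap: "two_coordinate_map l k u (- v) = two_coordinate_map k l u v"
  by (simp add: two_coordinate_map_def add.commute)

lemma eq_if_add_diff_eq:
  fixes a b c d :: "'a::real_vector"
  assumes "a + b = c + d" and "a - b = c - d"
  shows "a = c \<and> b = d"
proof -
  have "2 *\<^sub>R a = (a + b) + (a - b)"
    by (simp add: scaleR_2)
  also have "\<dots> = 2 *\<^sub>R c"
    using assms by (simp add: scaleR_2)
  finally show ?thesis
    using assms(1) by simp
qed

definition nonzero_columns :: "real^'m^'n \<Rightarrow> 'm set" where
  "nonzero_columns A = {c. column c A \<noteq> 0}"

lemma nonzero_columns_coordinate_map:
  assumes "p \<noteq> q"
  shows "nonzero_columns (fst (coordinate_map k p q)) = {k}"
  using assms by (auto simp: nonzero_columns_def coordinate_map_def column_single_column)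

lemma nonzero_columns_two_coordinate_map:
  assumes "k \<noteq> l" and "u + v \<noteq> 0" and "u - v \<noteq> 0"
  shows "nonzero_columns (fst (two_coordinate_map k l u v)) = {k, l}"
  using assms
  by (auto simp: nonzero_columns_def two_coordinate_map_def column_add column_single_column)

lemma coordinate_map_inject:
  assumes eq: "coordinate_map k p q = coordinate_map k' p' q'" and "p \<noteq> q" and "p' \<noteq> q'"
  shows "k = k' \<and> p = p' \<and> q = q'"
proof -
  have "{k} = {k'}"
    using nonzero_columns_coordinate_map[OF \<open>p \<noteq> q\<close>, of k]
      nonzero_columns_coordinate_map[OF \<open>p' \<noteq> q'\<close>, of k'] eq by simp
  then have "k = k'" by simp
  moreover have "p - q = p' - q'"
    using arg_cong[OF eq, of "\<lambda>f. column k (fst f)"] \<open>k = k'\<close>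
    by (simp add: coordinate_map_def column_single_column)
  moreover have "p + q = p' + q'"
    using arg_cong[OF eq, of snd] by (simp add: coordinate_map_def)
  ultimately show ?thesis
    using eq_if_add_diff_eq[of p q p' q'] by simp
qed

lemma two_coordinate_map_inject:
  assumes eq: "two_coordinate_map k l u v = two_coordinate_map k l u' v'" and "k \<noteq> l"
  shows "u = u' \<and> v = v'"
proof (rule eq_if_add_diff_eq)
  show "u + v = u' + v'"
    using arg_cong[OF eq, of "\<lambda>f. column k (fst f)"] \<open>k \<noteq> l\<close>
    by (simp add: two_coordinate_map_def column_add column_single_column)
  show "u - v = u' - v'"
    using arg_cong[OF eq, of "\<lambda>f. column l (fst f)"] \<open>k \<noteq> l\<close>
    by (simp add: two_coordinate_map_def column_add column_single_column)
qed

lemma axis_add_diff_axis_neq_0: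
  assumes "i \<noteq> j"
  shows "axis i \<sigma> + axis j 1 \<noteq> (0 :: real^'n)" and "axis i \<sigma> - axis j 1 \<noteq> (0 :: real^'n)"
  using assms by (auto simp: vec_eq_iff axis_def)

lemma two_coordinate_map_axis_inject:
  fixes k l k' l' :: "'m::finite" and i j i' j' :: "'n::finite"
  assumes eq: "two_coordinate_map k l (axis i \<sigma>) (axis j 1)
      = two_coordinate_map k' l' (axis i' \<sigma>') (axis j' 1)"
    and "k \<noteq> l" "k' \<noteq> l'" "i \<noteq> j" "i' \<noteq> j'" "\<sigma> = 1 \<or> \<sigma> = -1" "\<sigma>' = 1 \<or> \<sigma>' = -1"
  shows "k = k' \<and> l = l' \<and> i = i' \<and> j = j' \<and> \<sigma> = \<sigma>'"
proof -
  have "nonzero_columns (fst (two_coordinate_map k l (axis i \<sigma>) (axis j 1))) = {k, l}"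
    using assms by (intro nonzero_columns_two_coordinate_map axis_add_diff_axis_neq_0)
  moreover have
    "nonzero_columns (fst (two_coordinate_map k' l' (axis i' \<sigma>') (axis j' 1))) = {k', l'}"
    using assms by (intro nonzero_columns_two_coordinate_map axis_add_diff_axis_neq_0)
  ultimately have "{k, l} = {k', l'}"
    using eq by simp
  then consider "k = k'" "l = l'" | "k = l'" "l = k'"
    by (auto simp: doubleton_eq_iff)
  then show ?thesis
  proof cases
    case 1
    then have "axis i \<sigma> = axis i' \<sigma>' \<and> axis j 1 = (axis j' 1 :: real^'n)"
      using eq \<open>k \<noteq> l\<close> by (simp add: two_coordinate_map_inject)
    with 1 assms(6,7) show ?thesis
      by (auto simp: axis_eq_axis)
  next
    case 2
    then have "two_coordinate_map k l (axis i \<sigma>) (axis j 1)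
        = two_coordinate_map k l (axis i' \<sigma>') (- axis j' 1)"
      using eq two_coordinate_map_swap[of k' l' "axis i' \<sigma>'" "- axis j' 1"] by simp
    then have "axis j 1 = - (axis j' 1 :: real^'n)"
      using \<open>k \<noteq> l\<close> by (simp add: two_coordinate_map_inject)
    then have "(1 :: real) = - axis j' 1 $ j"
      by (metis axis_nth vector_uminus_component)
    then show ?thesis
      by (simp add: axis_def split: if_splits)
  qed
qed

lemma card_distinct_pairs:
  assumes "finite S"
  shows "card {(a, b). a \<in> S \<and> b \<in> S \<and> a \<noteq> b} = card S * (card S - 1)"
proof -
  have "{(a, b). a \<in> S \<and> b \<in> S \<and> a \<noteq> b} = (SIGMA a:S. S - {a})"
    by auto
  then show ?thesis
    using assms by simp
qed

definition constant_vertices :: "((real^'m^'n) \<times> (real^'n)) set" where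
  "constant_vertices = (\<lambda>w. (0, w)) ` cross_vertices"

definition coordinate_vertices :: "((real^'m^'n) \<times> (real^'n)) set" where
  "coordinate_vertices = (\<lambda>(k, p, q). coordinate_map k p q) `
    (UNIV \<times> {(p, q). p \<in> cross_vertices \<and> q \<in> cross_vertices \<and> p \<noteq> q})"

definition two_coordinate_vertices :: "((real^'m^'n) \<times> (real^'n)) set" where
  "two_coordinate_vertices =
    (\<lambda>((k, l), (i, j), \<sigma>). two_coordinate_map k l (axis i \<sigma>) (axis j 1)) `
      ({(k, l). k \<noteq> l} \<times> {(i, j). i \<noteq> j} \<times> {1, -1})"

lemma vertex_families_subset_vert_poly:
  "constant_vertices \<union> coordinate_vertices \<union> two_coordinate_vertices
    \<subseteq> vert_poly (cube_poly :: (real^'m) set) (cross_poly :: (real^'n) set)"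
proof -
  have "(0, w) \<in> vert_poly cube_poly cross_poly" if "w \<in> cross_vertices" for w :: "real^'n"
    using that by (intro mem_vert_poly_cube_cross) (simp add: eval_at_def)
  moreover have "coordinate_map k p q \<in> vert_poly cube_poly cross_poly"
    if "p \<in> cross_vertices" "q \<in> cross_vertices" for k :: 'm and p q :: "real^'n"
    using that by (intro mem_vert_poly_cube_cross) (simp add: eval_at_coordinate_map)
  moreover have "two_coordinate_map k l u v \<in> vert_poly cube_poly cross_poly"
    if "u \<in> cross_vertices" "v \<in> cross_vertices" for k l :: 'm and u v :: "real^'n"
    using that
    by (intro mem_vert_poly_cube_cross) (simp add: eval_at_two_coordinate_map uminus_cross_vertices)
  moreover have "axis i \<sigma> \<in> cross_vertices" if "\<sigma> = 1 \<or> \<sigma> = -1" for i :: 'n and \<sigma> :: real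
    using that by (auto simp: cross_vertices_def)
  ultimately show ?thesis
    by (force simp: constant_vertices_def coordinate_vertices_def two_coordinate_vertices_def)
qed

lemma card_constant_vertices:
  "card (constant_vertices :: ((real^'m^'n) \<times> (real^'n)) set) = 2 * CARD('n)"
  by (simp add: constant_vertices_def card_image inj_on_def card_cross_vertices)

lemma card_coordinate_vertices:
  "card (coordinate_vertices :: ((real^'m^'n) \<times> (real^'n)) set)
    = CARD('m) * (2 * CARD('n) * (2 * CARD('n) - 1))"
proof -
  have "inj_on (\<lambda>(k :: 'm, p :: real^'n, q). coordinate_map k p q)
      (UNIV \<times> {(p, q). p \<in> cross_vertices \<and> q \<in> cross_vertices \<and> p \<noteq> q})"
    by (auto simp: inj_on_def dest: coordinate_map_inject)
  then show ?thesis
    by (simp add: coordinate_vertices_def card_image card_cartesian_product card_distinct_pairs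
        finite_cross_vertices card_cross_vertices)
qed

lemma card_two_coordinate_vertices:
  "card (two_coordinate_vertices :: ((real^'m^'n) \<times> (real^'n)) set)
    = CARD('m) * (CARD('m) - 1) * (CARD('n) * (CARD('n) - 1) * 2)"
proof -
  have "inj_on (\<lambda>((k :: 'm, l), (i :: 'n, j), \<sigma>). two_coordinate_map k l (axis i \<sigma>) (axis j 1))
      ({(k, l). k \<noteq> l} \<times> {(i, j). i \<noteq> j} \<times> {1, -1})"
    by (auto simp: inj_on_def dest: two_coordinate_map_axis_inject)
  moreover have "card {(k :: 'm, l). k \<noteq> l} = CARD('m) * (CARD('m) - 1)"
    using card_distinct_pairs[of "UNIV :: 'm set"] by simp
  moreover have "card {(i :: 'n, j). i \<noteq> j} = CARD('n) * (CARD('n) - 1)"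
    using card_distinct_pairs[of "UNIV :: 'n set"] by simp
  ultimately show ?thesis
    by (simp add: two_coordinate_vertices_def card_image card_cartesian_product)
qed

lemma card_nonzero_columns_vertex_families:
  fixes f :: "(real^'m^'n) \<times> (real^'n)"
  shows "f \<in> constant_vertices \<Longrightarrow> card (nonzero_columns (fst f)) = 0"
    and "f \<in> coordinate_vertices \<Longrightarrow> card (nonzero_columns (fst f)) = 1"
    and "f \<in> two_coordinate_vertices \<Longrightarrow> card (nonzero_columns (fst f)) = 2"
proof -
  show "f \<in> constant_vertices \<Longrightarrow> card (nonzero_columns (fst f)) = 0"
    by (auto simp: constant_vertices_def nonzero_columns_def column_def vec_eq_iff)
  show "f \<in> coordinate_vertices \<Longrightarrow> card (nonzero_columns (fst f)) = 1"
    by (auto simp: coordinate_vertices_def nonzero_columns_coordinate_map)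
  assume "f \<in> two_coordinate_vertices"
  then obtain k l i j \<sigma> where "k \<noteq> l" "i \<noteq> j"
    and f: "f = two_coordinate_map k l (axis i \<sigma>) (axis j 1)"
    by (auto simp: two_coordinate_vertices_def)
  then have "nonzero_columns (fst f) = {k, l}"
    unfolding f by (intro nonzero_columns_two_coordinate_map axis_add_diff_axis_neq_0)
  with \<open>k \<noteq> l\<close> show "card (nonzero_columns (fst f)) = 2"
    by simp
qed

lemma vertex_families_disjoint:
  "constant_vertices \<inter> coordinate_vertices = {}"
  "(constant_vertices \<union> coordinate_vertices) \<inter> two_coordinate_vertices = {}"
  using card_nonzero_columns_vertex_families by fastforce+

theorem proposition7p1:
  assumes "CARD('m::finite) \<ge> 2" and "CARD('n::finite) \<ge> 2"
  shows "card (vert_poly (cube_poly :: (real ^ 'm) set) (cross_poly :: (real ^ 'n) set))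
    \<ge> 2 * CARD('n) + 2 * CARD('m) * CARD('n) * (2 * CARD('n) - 1)
       + 2 * CARD('m) * CARD('n) * (CARD('m) - 1) * (CARD('n) - 1)"
proof -
  let ?C = "constant_vertices :: ((real^'m^'n) \<times> (real^'n)) set"
  let ?D = "coordinate_vertices :: ((real^'m^'n) \<times> (real^'n)) set"
  let ?T = "two_coordinate_vertices :: ((real^'m^'n) \<times> (real^'n)) set"
  have finite: "finite ?C" "finite ?D" "finite ?T"
    using finite_subset[OF vertex_families_subset_vert_poly finite_vert_poly_cube_cross] by auto
  have "2 * CARD('n) + 2 * CARD('m) * CARD('n) * (2 * CARD('n) - 1)
       + 2 * CARD('m) * CARD('n) * (CARD('m) - 1) * (CARD('n) - 1) = card ?C + card ?D + card ?T"
    by (simp add: card_constant_vertices card_coordinate_vertices card_two_coordinate_vertices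
        ac_simps)
  also have "\<dots> = card (?C \<union> ?D) + card ?T"
    using card_Un_disjoint[OF finite(1,2) vertex_families_disjoint(1)] by simp
  also have "\<dots> = card (?C \<union> ?D \<union> ?T)"
    using card_Un_disjoint[OF _ finite(3) vertex_families_disjoint(2)] finite by simp
  also have "\<dots> \<le> card (vert_poly (cube_poly :: (real ^ 'm) set) (cross_poly :: (real ^ 'n) set))"
    by (intro card_mono finite_vert_poly_cube_cross vertex_families_subset_vert_poly)
  finally show ?thesis .
qed

end
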